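(* Let $G$ be a finitely generated group and $H$ a subgroup of finite index in $G$. Then $\gamma_H^c\preceq\gamma_G^c$.
   Context: For a finitely generated group $G$ with a fixed finite generating set $S$, let $B(n)$ denote the ball of radius $n$ about the identity in the word metric induced by $S$. The conjugacy growth function is $\gamma_G^c(n)=\#\{\text{conjugacy classes } C \text{ of } G : C\cap B(n)\neq\emptyset\}$; for $H$ it is computed with respect to a finite generating set of $H$ and conjugacy in $H$. For functions $f,g:\mathbb N\to\mathbb N$, write $f\preceq g$ if there exist constants $C,D$ such that $f(n)\le C g(Dn)$ for all $n\in\mathbb N$. *)

theory Defs
  imports "HOL-Algebra.Algebra"
begin

fun word_ball :: "('a, 'b) monoid_scheme \<Rightarrow> 'a set \<Rightarrow> nat \<Rightarrow> 'a set" where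
  "word_ball G S 0 = {\<one>\<^bsub>G\<^esub>}"
| "word_ball G S (Suc n) = word_ball G S n \<union>
     {s \<otimes>\<^bsub>G\<^esub> x | s x. s \<in> S \<union> (\<lambda>t. inv\<^bsub>G\<^esub> t) ` S \<and> x \<in> word_ball G S n}"

definition finite_gen_set :: "('a, 'b) monoid_scheme \<Rightarrow> 'a set \<Rightarrow> bool" where
  "finite_gen_set G S \<longleftrightarrow> finite S \<and> S \<subseteq> carrier G \<and> generate G S = carrier G"

definition conj_class :: "('a, 'b) monoid_scheme \<Rightarrow> 'a \<Rightarrow> 'a set" where
  "conj_class G x = {g \<otimes>\<^bsub>G\<^esub> x \<otimes>\<^bsub>G\<^esub> inv\<^bsub>G\<^esub> g | g. g \<in> carrier G}"

definition conj_classes :: "('a, 'b) monoid_scheme \<Rightarrow> 'a set set" where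
  "conj_classes G = conj_class G ` carrier G"

definition conj_growth :: "('a, 'b) monoid_scheme \<Rightarrow> 'a set \<Rightarrow> nat \<Rightarrow> nat" where
  "conj_growth G S n = card {C \<in> conj_classes G. C \<inter> word_ball G S n \<noteq> {}}"

definition growth_preceq :: "(nat \<Rightarrow> nat) \<Rightarrow> (nat \<Rightarrow> nat) \<Rightarrow> bool" where
  "growth_preceq f g \<longleftrightarrow> (\<exists>C D::nat. \<forall>n. f n \<le> C * g (D * n))"

end

theory Submission
  imports Defs
begin

text \<open>Every generator of \<open>H\<close> and its inverse lie in a fixed word ball \<open>B\<^sub>G(L)\<close>, so
  \<open>B\<^sub>H(n) \<subseteq> B\<^sub>G(L n)\<close>, and every conjugacy class of \<open>H\<close> lies in the conjugacy class of \<open>G\<close>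
  of any of its elements. Conversely, the \<open>G\<close>-class of \<open>c\<close> contains at most \<open>[G : H]\<close>
  classes of \<open>H\<close>: if \<open>g c g\<inverse>\<close> lies in \<open>H\<close>, its \<open>H\<close>-class only depends on the coset \<open>H g\<close>.
  Counting classes that meet the balls gives \<open>\<gamma>\<^sup>c\<^sub>H(n) \<le> [G : H] \<cdot> \<gamma>\<^sup>c\<^sub>G(L n)\<close>.\<close>

lemma card_le_mult_card_if_fibres_bounded:
  assumes "finite B" "\<And>a. a \<in> A \<Longrightarrow> \<exists>b\<in>B. R a b"
    and "\<And>b. b \<in> B \<Longrightarrow> finite {a \<in> A. R a b} \<and> card {a \<in> A. R a b} \<le> k"
  shows "card A \<le> k * card B"
proof -
  have "A = (\<Union>b\<in>B. {a \<in> A. R a b})" using assms(2) by auto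
  then have "card A \<le> (\<Sum>b\<in>B. card {a \<in> A. R a b})"
    by (metis card_UN_le assms(1))
  also have "\<dots> \<le> (\<Sum>b\<in>B. k)" by (rule sum_mono) (use assms(3) in blast)
  finally show ?thesis by (simp add: mult.commute)
qed

lemma finite_word_ball: "finite S \<Longrightarrow> finite (word_ball G S n)"
proof (induction n)
  case (Suc n)
  have "{s \<otimes>\<^bsub>G\<^esub> x | s x. s \<in> S \<union> (\<lambda>t. inv\<^bsub>G\<^esub> t) ` S \<and> x \<in> word_ball G S n}
     = (\<lambda>(s, x). s \<otimes>\<^bsub>G\<^esub> x) ` ((S \<union> (\<lambda>t. inv\<^bsub>G\<^esub> t) ` S) \<times> word_ball G S n)"
    by auto
  then show ?case using Suc by simp
qed simp

lemma word_ball_mono: "m \<le> n \<Longrightarrow> word_ball G S m \<subseteq> word_ball G S n"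
proof (induction n)
  case (Suc n)
  then show ?case by (cases "m = Suc n") auto
qed simp

context group
begin

lemma conj_class_self: "a \<in> carrier G \<Longrightarrow> a \<in> conj_class G a"
  unfolding conj_class_def by (force intro: exI[of _ \<one>])

lemma conj_class_conj_subset:
  assumes "a \<in> carrier G" "g \<in> carrier G"
  shows "conj_class G (g \<otimes> a \<otimes> inv g) \<subseteq> conj_class G a"
proof
  fix x assume "x \<in> conj_class G (g \<otimes> a \<otimes> inv g)"
  then obtain h where h: "h \<in> carrier G" "x = h \<otimes> (g \<otimes> a \<otimes> inv g) \<otimes> inv h"
    unfolding conj_class_def by auto
  then have "x = (h \<otimes> g) \<otimes> a \<otimes> inv (h \<otimes> g)"
    using assms by (simp add: m_assoc inv_mult_group)
  then show "x \<in> conj_class G a" unfolding conj_class_def using assms h by blast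
qed

lemma conj_class_conj:
  assumes "a \<in> carrier G" "g \<in> carrier G"
  shows "conj_class G (g \<otimes> a \<otimes> inv g) = conj_class G a"
proof
  have "a = inv g \<otimes> (g \<otimes> a \<otimes> inv g) \<otimes> inv (inv g)"
    using assms by (simp add: m_assoc inv_solve_left)
  then show "conj_class G a \<subseteq> conj_class G (g \<otimes> a \<otimes> inv g)"
    using conj_class_conj_subset[of "g \<otimes> a \<otimes> inv g" "inv g"] assms by simp
qed (rule conj_class_conj_subset[OF assms])

lemma conj_class_eq:
  assumes "a \<in> carrier G" "b \<in> conj_class G a"
  shows "conj_class G b = conj_class G a"
proof -
  obtain g where "g \<in> carrier G" "b = g \<otimes> a \<otimes> inv g"
    using assms(2) unfolding conj_class_def by auto
  then show ?thesis using conj_class_conj assms(1) by simp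
qed

lemma word_ball_subset_carrier: "S \<subseteq> carrier G \<Longrightarrow> word_ball G S n \<subseteq> carrier G"
  by (induction n) auto

lemma word_ball_mult:
  assumes "S \<subseteq> carrier G" "x \<in> word_ball G S m" "y \<in> word_ball G S n"
  shows "x \<otimes> y \<in> word_ball G S (m + n)"
  using assms(2)
proof (induction m arbitrary: x)
  case 0
  have "y \<in> carrier G" using assms word_ball_subset_carrier by blast
  then show ?case using 0 assms(3) by simp
next
  case (Suc m)
  show ?case
  proof (cases "x \<in> word_ball G S m")
    case True
    then show ?thesis using Suc.IH word_ball_mono[of "m + n" "Suc m + n"] by auto
  next
    case False
    then obtain s x' where sx: "x = s \<otimes> x'" "s \<in> S \<union> (\<lambda>t. inv t) ` S" "x' \<in> word_ball G S m"
      using Suc.prems by auto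
    have "s \<in> carrier G" "x' \<in> carrier G" "y \<in> carrier G"
      using sx assms word_ball_subset_carrier by auto
    then have "x \<otimes> y = s \<otimes> (x' \<otimes> y)" using sx(1) by (simp add: m_assoc)
    then show ?thesis using Suc.IH[OF sx(3)] sx(2) by auto
  qed
qed

lemma letter_in_word_ball:
  assumes "S \<subseteq> carrier G" "s \<in> S \<union> (\<lambda>t. inv t) ` S"
  shows "s \<in> word_ball G S 1"
proof -
  have "s = s \<otimes> \<one>" using assms by auto
  then show ?thesis using assms(2) by auto
qed

lemma generate_imp_in_word_ball:
  assumes "S \<subseteq> carrier G" "x \<in> generate G S"
  shows "\<exists>n. x \<in> word_ball G S n"
  using assms(2)
proof (induction rule: generate.induct)
  case one
  show ?case by (rule exI[of _ 0]) simp
next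
  case (incl h)
  then show ?case using letter_in_word_ball[OF assms(1)] by blast
next
  case (inv h)
  then show ?case using letter_in_word_ball[OF assms(1)] by blast
next
  case (eng h1 h2)
  then show ?case using word_ball_mult[OF assms(1)] by blast
qed

lemma finite_subset_word_ball:
  assumes "S \<subseteq> carrier G" "finite A" "A \<subseteq> generate G S"
  shows "\<exists>L. A \<subseteq> word_ball G S L"
  using assms(2,3)
proof (induction A rule: finite_induct)
  case (insert a A)
  obtain L where L: "A \<subseteq> word_ball G S L" using insert.IH insert.prems by auto
  obtain n where n: "a \<in> word_ball G S n"
    using generate_imp_in_word_ball[OF assms(1)] insert.prems by auto
  have "insert a A \<subseteq> word_ball G S (max L n)"
    using L n word_ball_mono[of L "max L n" G S] word_ball_mono[of n "max L n" G S] by auto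
  then show ?case ..
qed simp

lemma word_ball_subgroup_subset:
  assumes "subgroup H G" "T \<subseteq> H" "S \<subseteq> carrier G" "T \<union> (\<lambda>t. inv t) ` T \<subseteq> word_ball G S L"
  shows "word_ball (G\<lparr>carrier := H\<rparr>) T n \<subseteq> word_ball G S (L * n)"
proof (induction n)
  case (Suc n)
  have inv_H: "inv\<^bsub>G\<lparr>carrier := H\<rparr>\<^esub> t = inv t" if "t \<in> T" for t
    using m_inv_consistent[OF assms(1)] that assms(2) by blast
  show ?case
  proof
    fix z assume "z \<in> word_ball (G\<lparr>carrier := H\<rparr>) T (Suc n)"
    then consider "z \<in> word_ball (G\<lparr>carrier := H\<rparr>) T n"
      | s x where "z = s \<otimes> x" "s \<in> T \<union> (\<lambda>t. inv t) ` T" "x \<in> word_ball (G\<lparr>carrier := H\<rparr>) T n"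
      using inv_H by auto
    then show "z \<in> word_ball G S (L * Suc n)"
    proof cases
      case 1
      then show ?thesis using Suc word_ball_mono[of "L * n" "L * Suc n" G S] by auto
    next
      case 2
      then have "s \<otimes> x \<in> word_ball G S (L + L * n)"
        using word_ball_mult[OF assms(3)] assms(4) Suc by blast
      then show ?thesis using 2(1) by simp
    qed
  qed
qed simp

lemma subgroup_conj_class_subset:
  assumes "subgroup H G" "y \<in> H"
  shows "conj_class (G\<lparr>carrier := H\<rparr>) y \<subseteq> conj_class G y"
  using m_inv_consistent[OF assms(1)] subgroup.subset[OF assms(1)]
  unfolding conj_class_def by force

lemma finite_conj_classes_meeting:
  assumes "finite A"
  shows "finite {D \<in> conj_classes G. D \<inter> A \<noteq> {}}"
proof (rule finite_subset)
  show "{D \<in> conj_classes G. D \<inter> A \<noteq> {}} \<subseteq> conj_class G ` A"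
  proof
    fix D assume "D \<in> {D \<in> conj_classes G. D \<inter> A \<noteq> {}}"
    then obtain a x where "a \<in> carrier G" "D = conj_class G a" "x \<in> D" "x \<in> A"
      unfolding conj_classes_def by blast
    then show "D \<in> conj_class G ` A" using conj_class_eq by blast
  qed
qed (use assms in blast)

lemma subgroup_conj_classes_in_conj_class:
  assumes "subgroup H G" "finite (rcosets H)" "c \<in> carrier G"
  defines "\<C> \<equiv> {C \<in> conj_classes (G\<lparr>carrier := H\<rparr>). C \<subseteq> conj_class G c}"
  shows "finite \<C>" "card \<C> \<le> card (rcosets H)"
proof -
  let ?K = "G\<lparr>carrier := H\<rparr>"
  interpret K: group ?K using subgroup_imp_group[OF assms(1)] .
  have H_carrier: "H \<subseteq> carrier G" using subgroup.subset[OF assms(1)] .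
  define r where "r M = (SOME x. x \<in> M)" for M :: "'a set"
  define class_at where "class_at M = conj_class ?K (r M \<otimes> c \<otimes> inv (r M))" for M
  have covered: "\<C> \<subseteq> class_at ` (rcosets H)"
  proof
    fix C assume "C \<in> \<C>"
    then obtain y where y: "y \<in> H" "C = conj_class ?K y" "C \<subseteq> conj_class G c"
      unfolding \<C>_def conj_classes_def by auto
    then have "y \<in> conj_class G c" using K.conj_class_self by auto
    then obtain g where g: "g \<in> carrier G" "y = g \<otimes> c \<otimes> inv g"
      unfolding conj_class_def by auto
    have "g \<in> H #> g" using g(1) assms(1) by (simp add: rcos_self)
    then have "r (H #> g) \<in> H #> g" unfolding r_def by (rule someI)
    then obtain h where h: "h \<in> H" "r (H #> g) = h \<otimes> g"
      unfolding r_coset_def by auto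
    have h_carrier: "h \<in> carrier G" using h(1) H_carrier by blast
    have "r (H #> g) \<otimes> c \<otimes> inv (r (H #> g)) = h \<otimes> y \<otimes> inv h"
      using h(2) h_carrier g assms(3) by (simp add: m_assoc inv_mult_group)
    also have "\<dots> = h \<otimes>\<^bsub>?K\<^esub> y \<otimes>\<^bsub>?K\<^esub> inv\<^bsub>?K\<^esub> h"
      using m_inv_consistent[OF assms(1) h(1)] by simp
    finally have "class_at (H #> g) = conj_class ?K (h \<otimes>\<^bsub>?K\<^esub> y \<otimes>\<^bsub>?K\<^esub> inv\<^bsub>?K\<^esub> h)"
      unfolding class_at_def by simp
    also have "\<dots> = C"
      using K.conj_class_conj y(1,2) h(1) by simp
    finally have "class_at (H #> g) = C" .
    moreover have "H #> g \<in> rcosets H" using g(1) unfolding RCOSETS_def by blast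
    ultimately show "C \<in> class_at ` (rcosets H)" by blast
  qed
  have "finite (class_at ` (rcosets H))" using assms(2) by blast
  then show "finite \<C>" using covered finite_subset by blast
  have "card \<C> \<le> card (class_at ` (rcosets H))"
    by (rule card_mono) fact+
  also have "\<dots> \<le> card (rcosets H)" by (rule card_image_le[OF assms(2)])
  finally show "card \<C> \<le> card (rcosets H)" .
qed

lemma subgroup_conj_growth_le:
  assumes "subgroup H G" "finite (rcosets H)" "finite S"
    and "word_ball (G\<lparr>carrier := H\<rparr>) T n \<subseteq> word_ball G S m"
  shows "conj_growth (G\<lparr>carrier := H\<rparr>) T n \<le> card (rcosets H) * conj_growth G S m"
  unfolding conj_growth_def
proof (rule card_le_mult_card_if_fibres_bounded[where R = "(\<subseteq>)"])
  let ?K = "G\<lparr>carrier := H\<rparr>"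
  have H_carrier: "H \<subseteq> carrier G" using subgroup.subset[OF assms(1)] .
  show "finite {D \<in> conj_classes G. D \<inter> word_ball G S m \<noteq> {}}"
    using finite_conj_classes_meeting finite_word_ball[OF assms(3)] .
  show "\<exists>D\<in>{D \<in> conj_classes G. D \<inter> word_ball G S m \<noteq> {}}. C \<subseteq> D"
    if C: "C \<in> {C \<in> conj_classes ?K. C \<inter> word_ball ?K T n \<noteq> {}}" for C
  proof -
    obtain y where y: "y \<in> H" "C = conj_class ?K y"
      using C unfolding conj_classes_def by auto
    have "C \<subseteq> conj_class G y" "conj_class G y \<in> conj_classes G"
      using subgroup_conj_class_subset[OF assms(1)] y H_carrier
      unfolding conj_classes_def by auto
    moreover have "C \<inter> word_ball G S m \<noteq> {}" using C assms(4) by blast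
    ultimately show ?thesis by blast
  qed
  show "finite {C \<in> {C \<in> conj_classes ?K. C \<inter> word_ball ?K T n \<noteq> {}}. C \<subseteq> D} \<and>
      card {C \<in> {C \<in> conj_classes ?K. C \<inter> word_ball ?K T n \<noteq> {}}. C \<subseteq> D} \<le> card (rcosets H)"
    if D: "D \<in> {D \<in> conj_classes G. D \<inter> word_ball G S m \<noteq> {}}" for D
  proof -
    obtain c where c: "c \<in> carrier G" "D = conj_class G c"
      using D unfolding conj_classes_def by auto
    have "{C \<in> {C \<in> conj_classes ?K. C \<inter> word_ball ?K T n \<noteq> {}}. C \<subseteq> D}
        \<subseteq> {C \<in> conj_classes ?K. C \<subseteq> conj_class G c}"
      using c by auto
    then show ?thesis
      using subgroup_conj_classes_in_conj_class[OF assms(1,2) c(1)]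
      by (meson card_mono finite_subset le_trans)
  qed
qed

end

theorem lemma1:
  fixes G :: "('a, 'b) monoid_scheme" and S T :: "'a set" and H :: "'a set"
  assumes "group G"
    and "finite_gen_set G S"
    and "subgroup H G"
    and "finite (rcosets\<^bsub>G\<^esub> H)"
    and "finite_gen_set (G\<lparr>carrier := H\<rparr>) T"
  shows "growth_preceq (conj_growth (G\<lparr>carrier := H\<rparr>) T) (conj_growth G S)"
proof -
  interpret group G by fact
  have S: "finite S" "S \<subseteq> carrier G" "generate G S = carrier G"
    using assms(2) unfolding finite_gen_set_def by auto
  have T: "finite T" "T \<subseteq> H"
    using assms(5) unfolding finite_gen_set_def by auto
  let ?letters = "T \<union> (\<lambda>t. inv\<^bsub>G\<^esub> t) ` T"
  have T_carrier: "T \<subseteq> carrier G" using T(2) subgroup.subset[OF assms(3)] by blast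
  have "?letters \<subseteq> generate G S" using T_carrier unfolding S(3) by auto
  moreover have "finite ?letters" using T(1) by simp
  ultimately obtain L where "?letters \<subseteq> word_ball G S L"
    using finite_subset_word_ball[OF S(2)] by blast
  then have "word_ball (G\<lparr>carrier := H\<rparr>) T n \<subseteq> word_ball G S (L * n)" for n
    by (rule word_ball_subgroup_subset[OF assms(3) T(2) S(2)])
  then have "conj_growth (G\<lparr>carrier := H\<rparr>) T n \<le> card (rcosets\<^bsub>G\<^esub> H) * conj_growth G S (L * n)"
    for n by (rule subgroup_conj_growth_le[OF assms(3,4) S(1)])
  then show ?thesis unfolding growth_preceq_def by blast
qed

end
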